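(* For every pair $(k,\ell)$ of positive integers and every prime power $q$, there are only finitely many (up to isomorphism) simple, cosimple, $GF(q)$-representable matroids that are $(k,\ell)$-uniform.
   Context: For positive integers $k,\ell$, a matroid is called $(k,\ell)$-uniform if it has no minor isomorphic to $U_{k,k}\oplus U_{0,\ell}$ (the direct sum of a $k$-element free matroid and $\ell$ loops). A matroid is cosimple if its dual is simple. *)

theory Defs
  imports Main
begin

definition matroid :: "'a set \<Rightarrow> ('a set \<Rightarrow> bool) \<Rightarrow> bool" where
  "matroid E I \<longleftrightarrow> finite E \<and> I {} \<and> (\<forall>X. I X \<longrightarrow> X \<subseteq> E)
     \<and> (\<forall>X Y. I Y \<and> X \<subseteq> Y \<longrightarrow> I X)
     \<and> (\<forall>X Y. I X \<and> I Y \<and> card X < card Y \<longrightarrow> (\<exists>y\<in>Y - X. I (insert y X)))"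

definition mrank :: "('a set \<Rightarrow> bool) \<Rightarrow> 'a set \<Rightarrow> nat" where
  "mrank I X = Max (card ` {Y. Y \<subseteq> X \<and> I Y})"

text \<open>Independent sets of the minor M / C \ D (ground set E - C - D).\<close>
definition minor_indep :: "'a set \<Rightarrow> ('a set \<Rightarrow> bool) \<Rightarrow> 'a set \<Rightarrow> 'a set \<Rightarrow> 'a set \<Rightarrow> bool" where
  "minor_indep E I C D X \<longleftrightarrow> X \<subseteq> E - C - D \<and> mrank I (X \<union> C) = card X + mrank I C"

definition matroid_iso :: "'a set \<Rightarrow> ('a set \<Rightarrow> bool) \<Rightarrow> 'b set \<Rightarrow> ('b set \<Rightarrow> bool) \<Rightarrow> bool" where
  "matroid_iso E1 I1 E2 I2 \<longleftrightarrow>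
     (\<exists>f. bij_betw f E1 E2 \<and> (\<forall>X. X \<subseteq> E1 \<longrightarrow> (I1 X \<longleftrightarrow> I2 (f ` X))))"

definition has_minor_iso :: "'a set \<Rightarrow> ('a set \<Rightarrow> bool) \<Rightarrow> 'b set \<Rightarrow> ('b set \<Rightarrow> bool) \<Rightarrow> bool" where
  "has_minor_iso E I E' I' \<longleftrightarrow>
     (\<exists>C D. C \<subseteq> E \<and> D \<subseteq> E \<and> C \<inter> D = {} \<and>
        matroid_iso (E - C - D) (minor_indep E I C D) E' I')"

text \<open>U_{k,k} direct sum U_{0,l}: k coloops {0..<k} and l loops {k..<k+l}.\<close>
definition free_plus_loops_ground :: "nat \<Rightarrow> nat \<Rightarrow> nat set" where
  "free_plus_loops_ground k l = {..<k + l}"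

definition free_plus_loops_indep :: "nat \<Rightarrow> nat \<Rightarrow> nat set \<Rightarrow> bool" where
  "free_plus_loops_indep k l X \<longleftrightarrow> X \<subseteq> {..<k}"

definition kl_uniform :: "nat \<Rightarrow> nat \<Rightarrow> 'a set \<Rightarrow> ('a set \<Rightarrow> bool) \<Rightarrow> bool" where
  "kl_uniform k l E I \<longleftrightarrow>
     \<not> has_minor_iso E I (free_plus_loops_ground k l) (free_plus_loops_indep k l)"

text \<open>Simple: no loops and no parallel pairs, i.e. all sets of size at most 2 are independent.\<close>
definition simple_matroid :: "'a set \<Rightarrow> ('a set \<Rightarrow> bool) \<Rightarrow> bool" where
  "simple_matroid E I \<longleftrightarrow> (\<forall>X. X \<subseteq> E \<and> card X \<le> 2 \<longrightarrow> I X)"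

definition is_basis :: "('a set \<Rightarrow> bool) \<Rightarrow> 'a set \<Rightarrow> bool" where
  "is_basis I B \<longleftrightarrow> I B \<and> (\<forall>Y. I Y \<and> B \<subseteq> Y \<longrightarrow> Y = B)"

definition dual_indep :: "'a set \<Rightarrow> ('a set \<Rightarrow> bool) \<Rightarrow> 'a set \<Rightarrow> bool" where
  "dual_indep E I X \<longleftrightarrow> X \<subseteq> E \<and> (\<exists>B. is_basis I B \<and> X \<inter> B = {})"

definition cosimple_matroid :: "'a set \<Rightarrow> ('a set \<Rightarrow> bool) \<Rightarrow> bool" where
  "cosimple_matroid E I \<longleftrightarrow> simple_matroid E (dual_indep E I)"

definition lin_indep_family :: "('a \<Rightarrow> nat \<Rightarrow> 'f::field) \<Rightarrow> 'a set \<Rightarrow> bool" where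
  "lin_indep_family v X \<longleftrightarrow>
     (\<forall>c. (\<forall>i. (\<Sum>x\<in>X. c x * v x i) = 0) \<longrightarrow> (\<forall>x\<in>X. c x = 0))"

definition represents :: "('a \<Rightarrow> nat \<Rightarrow> 'f::field) \<Rightarrow> 'a set \<Rightarrow> ('a set \<Rightarrow> bool) \<Rightarrow> bool" where
  "represents v E I \<longleftrightarrow> (\<forall>X. X \<subseteq> E \<longrightarrow> (I X \<longleftrightarrow> lin_indep_family v X))"

end

theory Submission
  imports Defs "HOL-Library.FuncSet" "HOL-Library.Cardinality"
begin

(*
  Fix a representation of M over the field F with q elements and a basis B, and write every
  element in coordinates with respect to B.

  If M is simple, distinct elements have distinct coordinate vectors, so |E| <= q^|B|.
  If M is cosimple, any two elements b, b' of B are avoided by a common basis B'; expanding b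
  in B' shows that b and b' are told apart by the coordinates of some element of B' - B, so
  distinct elements of B have distinct coordinate rows on E - B and |B| <= q^|E - B|.

  If r(M) > k, split B into G and a set H of k + 1 elements, and group the elements of E - G by
  their coordinates on H. The members of one group are all spanned by an independent set C of
  size at most r(M) - k: by C = G if their coordinates on H vanish, and by C = G + x0 for any
  member x0 otherwise. Extending C by k elements X of B and contracting C turns X into a free
  set and the other group members into loops, so by (k,l)-uniformity each group has at most l
  elements. Hence |E - B| <= q^(k+1) l, which bounds |B| and |E|, and matroids of bounded size
  fall into finitely many isomorphism classes.
*)

lemma card_le_card_image_mult:
  assumes "finite A" and "\<And>y. card {x\<in>A. f x = y} \<le> l"
  shows "card A \<le> card (f ` A) * l"
proof -
  have "card A = card (\<Union>y\<in>f ` A. {x\<in>A. f x = y})"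
    by (rule arg_cong[where f = card]) blast
  also have "\<dots> \<le> (\<Sum>y\<in>f ` A. card {x\<in>A. f x = y})"
    using assms(1) by (intro card_UN_le) simp
  also have "\<dots> \<le> card (f ` A) * l"
    using sum_bounded_above[of "f ` A" _ l] assms(2) by simp
  finally show ?thesis .
qed

lemma card_restrict_image_le:
  fixes g :: "'c \<Rightarrow> 'b \<Rightarrow> 'f::finite"
  assumes "finite A"
  shows "card ((\<lambda>x. restrict (g x) A) ` S) \<le> CARD('f) ^ card A"
proof -
  have "(\<lambda>x. restrict (g x) A) ` S \<subseteq> A \<rightarrow>\<^sub>E UNIV" by auto
  then have "card ((\<lambda>x. restrict (g x) A) ` S) \<le> card (A \<rightarrow>\<^sub>E (UNIV :: 'f set))"
    using assms by (intro card_mono) (simp_all add: finite_PiE)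
  also have "\<dots> = CARD('f) ^ card A" using assms by (simp add: card_funcsetE)
  finally show ?thesis .
qed

lemma matroid_finite: "matroid E I \<Longrightarrow> finite E"
  unfolding matroid_def by blast

lemma matroid_indep_subset: "matroid E I \<Longrightarrow> I X \<Longrightarrow> X \<subseteq> E"
  unfolding matroid_def by blast

lemma matroid_indep_mono: "matroid E I \<Longrightarrow> I Y \<Longrightarrow> X \<subseteq> Y \<Longrightarrow> I X"
  unfolding matroid_def by blast

lemma matroid_augment:
  "matroid E I \<Longrightarrow> I X \<Longrightarrow> I Y \<Longrightarrow> card X < card Y \<Longrightarrow> \<exists>y\<in>Y - X. I (insert y X)"
  unfolding matroid_def by blast

lemma matroid_finite_indep: "matroid E I \<Longrightarrow> I X \<Longrightarrow> finite X"
  by (meson finite_subset matroid_finite matroid_indep_subset)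

lemma ex_max_card_indep:
  assumes "matroid E I"
  obtains B where "I B" and "\<And>X. I X \<Longrightarrow> card X \<le> card B"
proof -
  have "card X \<le> card E" if "I X" for X
    using assms that by (meson card_mono matroid_finite matroid_indep_subset)
  then have "card ` {X. I X} \<subseteq> {..card E}" by auto
  then have fin: "finite (card ` {X. I X})" by (rule finite_subset) simp
  have "card ` {X. I X} \<noteq> {}" using assms unfolding matroid_def by blast
  with fin have "Max (card ` {X. I X}) \<in> card ` {X. I X}" by (rule Max_in)
  then obtain B where "I B" and "card B = Max (card ` {X. I X})" by auto
  moreover have "card X \<le> Max (card ` {X. I X})" if "I X" for X
    using fin that by (simp add: Max_ge)
  ultimately show thesis using that by simp
qed

lemma mrank_eq_card_if_indep:
  assumes "matroid E I" and "I S"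
  shows "mrank I S = card S"
  unfolding mrank_def
proof (rule Max_eqI)
  show "finite (card ` {Y. Y \<subseteq> S \<and> I Y})"
    using matroid_finite_indep[OF assms] by simp
  show "n \<le> card S" if "n \<in> card ` {Y. Y \<subseteq> S \<and> I Y}" for n
    using that matroid_finite_indep[OF assms] by (auto intro: card_mono)
  show "card S \<in> card ` {Y. Y \<subseteq> S \<and> I Y}" using assms(2) by blast
qed

lemma mrank_less_card_if_dep:
  assumes "matroid E I" and "finite S" and "\<not> I S"
  shows "mrank I S < card S"
proof -
  have "finite (card ` {Y. Y \<subseteq> S \<and> I Y})" using assms(2) by simp
  moreover have "card ` {Y. Y \<subseteq> S \<and> I Y} \<noteq> {}" using assms(1) unfolding matroid_def by blast
  ultimately have "mrank I S \<in> card ` {Y. Y \<subseteq> S \<and> I Y}"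
    unfolding mrank_def by (rule Max_in)
  then obtain T where "T \<subseteq> S" and "I T" and "mrank I S = card T" by auto
  moreover from \<open>T \<subseteq> S\<close> \<open>I T\<close> assms(3) have "T \<subset> S" by blast
  ultimately show ?thesis using assms(2) psubset_card_mono by metis
qed

lemma minor_indep_iff_indep_Un:
  assumes "matroid E I" and "I C" and "W \<subseteq> E - C - D"
  shows "minor_indep E I C D W \<longleftrightarrow> I (W \<union> C)"
proof -
  have "finite W" "finite C" "W \<inter> C = {}"
    using assms matroid_finite[OF assms(1)] matroid_finite_indep[OF assms(1,2)]
    by (auto intro: finite_subset)
  then have card_WC: "card (W \<union> C) = card W + mrank I C"
    using card_Un_disjoint mrank_eq_card_if_indep[OF assms(1,2)] by simp
  have "mrank I (W \<union> C) = card W + mrank I C \<longleftrightarrow> I (W \<union> C)"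
  proof
    assume "mrank I (W \<union> C) = card W + mrank I C"
    then show "I (W \<union> C)"
      using mrank_less_card_if_dep[OF assms(1), of "W \<union> C"] \<open>finite W\<close> \<open>finite C\<close> card_WC
      by (metis finite_UnI less_irrefl)
  qed (simp add: mrank_eq_card_if_indep[OF assms(1)] card_WC)
  then show ?thesis using assms(3) unfolding minor_indep_def by blast
qed

lemma indep_augment_from:
  assumes M: "matroid E I" and "I C" and "I B" and "card C + k \<le> card B"
  shows "\<exists>X. X \<subseteq> B - C \<and> card X = k \<and> I (C \<union> X)"
  using assms(4)
proof (induction k)
  case 0
  then show ?case using \<open>I C\<close> by auto
next
  case (Suc k)
  then obtain X where X: "X \<subseteq> B - C" "card X = k" "I (C \<union> X)" by auto
  have "finite C" "finite X"
    using matroid_finite_indep[OF M] \<open>I C\<close> \<open>I B\<close> X(1) by (auto intro: finite_subset)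
  moreover have "C \<inter> X = {}" using X(1) by blast
  ultimately have "card (C \<union> X) < card B"
    using Suc.prems X(2) by (simp add: card_Un_disjoint)
  then obtain y where y: "y \<in> B - (C \<union> X)" "I (insert y (C \<union> X))"
    using matroid_augment[OF M X(3) \<open>I B\<close>] by blast
  then have "insert y X \<subseteq> B - C" "card (insert y X) = Suc k" "I (C \<union> insert y X)"
    using X(1,2) \<open>finite X\<close> by auto
  then show ?case by blast
qed

section \<open>Minors isomorphic to U_{k,k} plus l loops\<close>

lemma ex_bij_free_plus_loops_ground:
  assumes "finite X" and "finite Y" and "X \<inter> Y = {}" and "card X = k" and "card Y = l"
  obtains f where "bij_betw f (X \<union> Y) (free_plus_loops_ground k l)" and "f ` X = {..<k}"
proof -
  obtain fX where fX: "bij_betw fX X {..<k}"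
    using finite_same_card_bij[of X "{..<k}"] assms(1,4) by auto
  obtain fY where fY: "bij_betw fY Y {k..<k + l}"
    using finite_same_card_bij[of Y "{k..<k + l}"] assms(2,5) by auto
  define f where "f z = (if z \<in> X then fX z else fY z)" for z
  have bX: "bij_betw f X {..<k}"
    using fX by (rule bij_betw_cong[THEN iffD1, rotated]) (simp add: f_def)
  have bY: "bij_betw f Y {k..<k + l}"
    using fY by (rule bij_betw_cong[THEN iffD1, rotated]) (use assms(3) in \<open>auto simp: f_def\<close>)
  have "bij_betw f (X \<union> Y) ({..<k} \<union> {k..<k + l})"
    by (rule bij_betw_combine[OF bX bY]) auto
  moreover have "{..<k} \<union> {k..<k + l} = free_plus_loops_ground k l"
    unfolding free_plus_loops_ground_def by auto
  moreover have "f ` X = {..<k}" using bX by (simp add: bij_betw_def)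
  ultimately show thesis using that by simp
qed

lemma has_free_plus_loops_minor:
  assumes M: "matroid E I" and indep: "I (C \<union> X)" and XY_sub: "X \<union> Y \<subseteq> E - C"
    and "X \<inter> Y = {}" and "card X = k" and "card Y = l" and loops: "\<forall>y\<in>Y. \<not> I (insert y C)"
  shows "has_minor_iso E I (free_plus_loops_ground k l) (free_plus_loops_indep k l)"
proof -
  define D where "D = E - C - (X \<union> Y)"
  have ground: "E - C - D = X \<union> Y" using XY_sub by (auto simp: D_def)
  have "I C" using matroid_indep_mono[OF M indep] by blast
  have "finite X" "finite Y"
    using XY_sub matroid_finite[OF M] by (auto intro: finite_subset)
  then obtain f where f: "bij_betw f (X \<union> Y) (free_plus_loops_ground k l)" "f ` X = {..<k}"
    by (rule ex_bij_free_plus_loops_ground) (use assms(4-6) in auto)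
  have minor_iff: "minor_indep E I C D W \<longleftrightarrow> free_plus_loops_indep k l (f ` W)"
    if W: "W \<subseteq> X \<union> Y" for W
  proof -
    have "minor_indep E I C D W \<longleftrightarrow> I (W \<union> C)"
      using minor_indep_iff_indep_Un[OF M \<open>I C\<close>] W ground by simp
    also have "\<dots> \<longleftrightarrow> W \<subseteq> X"
    proof
      assume "I (W \<union> C)"
      then have "I (insert y C)" if "y \<in> W" for y
        using matroid_indep_mono[OF M \<open>I (W \<union> C)\<close>, of "insert y C"] that by blast
      then show "W \<subseteq> X" using W loops by blast
    next
      assume "W \<subseteq> X"
      then show "I (W \<union> C)" using matroid_indep_mono[OF M indep, of "W \<union> C"] by blast
    qed
    also have "\<dots> \<longleftrightarrow> f ` W \<subseteq> f ` X"
    proof -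
      have "w \<in> X \<longleftrightarrow> f w \<in> f ` X" if "w \<in> W" for w
        using inj_on_image_mem_iff[OF bij_betw_imp_inj_on[OF f(1)], of w X] that W by auto
      then show ?thesis unfolding image_subset_iff by auto
    qed
    finally show ?thesis using f(2) unfolding free_plus_loops_indep_def by simp
  qed
  have "C \<subseteq> E" "D \<subseteq> E" "C \<inter> D = {}"
    using matroid_indep_subset[OF M \<open>I C\<close>] by (auto simp: D_def)
  then show ?thesis
    unfolding has_minor_iso_def matroid_iso_def
    using f(1) minor_iff ground
    by (intro exI[of _ C] exI[of _ D] conjI exI[of _ f] allI impI) simp_all
qed

lemma card_spanned_less_if_kl_uniform:
  assumes M: "matroid E I" and KL: "kl_uniform k l E I" and "I C" and "I B"
    and "card C + k \<le> card B" and "P \<subseteq> E - C" and spanned: "\<forall>y\<in>P. \<not> I (insert y C)"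
  shows "card P < l"
proof (rule ccontr)
  assume "\<not> card P < l"
  then obtain Y where "Y \<subseteq> P" and "card Y = l"
    using obtain_subset_with_card_n[of l P] by auto
  obtain X where X: "X \<subseteq> B - C" "card X = k" "I (C \<union> X)"
    using indep_augment_from[OF M \<open>I C\<close> \<open>I B\<close> assms(5)] by blast
  have "I (insert y C)" if "y \<in> X" for y
    using matroid_indep_mono[OF M X(3), of "insert y C"] that by blast
  then have "X \<inter> Y = {}" using spanned \<open>Y \<subseteq> P\<close> by blast
  moreover have "X \<union> Y \<subseteq> E - C"
    using X(1) matroid_indep_subset[OF M \<open>I B\<close>] assms(6) \<open>Y \<subseteq> P\<close> by blast
  moreover have "\<forall>y\<in>Y. \<not> I (insert y C)" using spanned \<open>Y \<subseteq> P\<close> by blast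
  ultimately have "has_minor_iso E I (free_plus_loops_ground k l) (free_plus_loops_indep k l)"
    using has_free_plus_loops_minor[OF M X(3) _ _ X(2) \<open>card Y = l\<close>] by blast
  with KL show False unfolding kl_uniform_def by blast
qed

section \<open>Linear families\<close>

definition in_span :: "('a \<Rightarrow> nat \<Rightarrow> 'f::field) \<Rightarrow> 'a set \<Rightarrow> 'a \<Rightarrow> bool" where
  "in_span v S x \<longleftrightarrow> (\<exists>c. \<forall>i. v x i = (\<Sum>s\<in>S. c s * v s i))"

lemma not_lin_indep_insert_if_in_span:
  fixes v :: "'a \<Rightarrow> nat \<Rightarrow> 'f::field"
  assumes "finite S" and "x \<notin> S" and "in_span v S x"
  shows "\<not> lin_indep_family v (insert x S)"
proof
  assume indep: "lin_indep_family v (insert x S)"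
  obtain c where c: "\<forall>i. v x i = (\<Sum>s\<in>S. c s * v s i)"
    using assms(3) unfolding in_span_def by blast
  define d where "d z = (if z = x then -1 else c z)" for z
  have "(\<Sum>z\<in>insert x S. d z * v z i) = 0" for i
  proof -
    have "(\<Sum>z\<in>S. d z * v z i) = (\<Sum>z\<in>S. c z * v z i)"
      using assms(2) by (intro sum.cong) (auto simp: d_def)
    then show ?thesis using assms(1,2) c by (simp add: d_def)
  qed
  then have "d x = 0" using indep unfolding lin_indep_family_def by blast
  then show False by (simp add: d_def)
qed

lemma in_span_if_not_lin_indep_insert:
  fixes v :: "'a \<Rightarrow> nat \<Rightarrow> 'f::field"
  assumes "finite S" and indep: "lin_indep_family v S" and "x \<notin> S"
    and dep: "\<not> lin_indep_family v (insert x S)"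
  shows "in_span v S x"
proof -
  obtain c z where c: "\<forall>i. (\<Sum>z\<in>insert x S. c z * v z i) = 0" and z: "z \<in> insert x S" "c z \<noteq> 0"
    using dep unfolding lin_indep_family_def by blast
  have relation: "c x * v x i + (\<Sum>s\<in>S. c s * v s i) = 0" for i
    using c assms(1,3) by simp
  have "c x \<noteq> 0"
  proof
    assume "c x = 0"
    then have "\<forall>s\<in>S. c s = 0"
      using relation indep unfolding lin_indep_family_def by simp
    with \<open>c x = 0\<close> z show False by auto
  qed
  have "v x i = (\<Sum>s\<in>S. (- c s / c x) * v s i)" for i
  proof -
    have "(\<Sum>s\<in>S. (- c s / c x) * v s i) = - (\<Sum>s\<in>S. c s * v s i) / c x"
      by (simp add: sum_divide_distrib sum_negf[symmetric])
    also have "\<dots> = v x i" using relation[of i] \<open>c x \<noteq> 0\<close> by (simp add: field_simps add_eq_0_iff)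
    finally show ?thesis by simp
  qed
  then show ?thesis unfolding in_span_def by (intro exI[of _ "\<lambda>s. - c s / c x"]) simp
qed

lemma lin_indep_family_coeffs_unique:
  fixes v :: "'a \<Rightarrow> nat \<Rightarrow> 'f::field"
  assumes "lin_indep_family v B" and "\<forall>i. (\<Sum>b\<in>B. \<alpha> b * v b i) = (\<Sum>b\<in>B. \<beta> b * v b i)"
    and "b \<in> B"
  shows "\<alpha> b = \<beta> b"
proof -
  have "\<forall>i. (\<Sum>b\<in>B. (\<alpha> b - \<beta> b) * v b i) = 0"
    using assms(2) by (simp add: left_diff_distrib sum_subtractf)
  then show ?thesis using assms(1,3) unfolding lin_indep_family_def by auto
qed

section \<open>Coordinates with respect to a basis\<close>

locale represented_matroid =
  fixes E :: "'a set" and I :: "'a set \<Rightarrow> bool" and v :: "'a \<Rightarrow> nat \<Rightarrow> 'f::{field,finite}"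
    and B :: "'a set"
  assumes matroid: "matroid E I" and represents: "represents v E I"
    and indep_basis: "I B" and card_indep_le: "\<And>X. I X \<Longrightarrow> card X \<le> card B"
begin

lemma finite_E: "finite E"
  using matroid by (rule matroid_finite)

lemma basis_subset: "B \<subseteq> E"
  using matroid indep_basis by (rule matroid_indep_subset)

lemma finite_basis: "finite B"
  using basis_subset finite_E by (rule finite_subset)

lemma indep_iff_lin_indep: "X \<subseteq> E \<Longrightarrow> I X \<longleftrightarrow> lin_indep_family v X"
  using represents unfolding represents_def by blast

lemma lin_indep_basis: "lin_indep_family v B"
  using indep_iff_lin_indep[OF basis_subset] indep_basis by blast

lemma dep_insert_iff_in_span:
  assumes "I S" and "x \<in> E - S"
  shows "\<not> I (insert x S) \<longleftrightarrow> in_span v S x"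
proof -
  have "S \<subseteq> E" and "finite S"
    using matroid_indep_subset[OF matroid] matroid_finite_indep[OF matroid] assms(1) by auto
  then have "\<not> I (insert x S) \<longleftrightarrow> \<not> lin_indep_family v (insert x S)"
    using indep_iff_lin_indep assms(2) by simp
  also have "\<dots> \<longleftrightarrow> in_span v S x"
    using not_lin_indep_insert_if_in_span[OF \<open>finite S\<close>] in_span_if_not_lin_indep_insert[OF \<open>finite S\<close>]
      indep_iff_lin_indep[OF \<open>S \<subseteq> E\<close>] assms by blast
  finally show ?thesis .
qed

lemma sum_indicator_mult: "z \<in> B \<Longrightarrow> (\<Sum>b\<in>B. (if b = z then 1 else 0) * v b i) = v z i"
  using finite_basis by (simp add: if_distrib[of "\<lambda>c. c * _"] cong: if_cong)

lemma in_span_basis: "x \<in> E \<Longrightarrow> in_span v B x"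
proof (cases "x \<in> B")
  case True
  then show ?thesis
    unfolding in_span_def using sum_indicator_mult
    by (intro exI[of _ "\<lambda>b. if b = x then 1 else 0"]) simp
next
  case False
  assume "x \<in> E"
  have "\<not> I (insert x B)"
    using card_indep_le[of "insert x B"] False finite_basis by auto
  then show ?thesis using dep_insert_iff_in_span indep_basis \<open>x \<in> E\<close> False by blast
qed

definition coord :: "'a \<Rightarrow> 'a \<Rightarrow> 'f" where
  "coord x = (SOME c. \<forall>i. v x i = (\<Sum>b\<in>B. c b * v b i))"

lemma coord_expansion: "x \<in> E \<Longrightarrow> v x i = (\<Sum>b\<in>B. coord x b * v b i)"
  using someI_ex[OF in_span_basis[unfolded in_span_def]] unfolding coord_def by blast

lemma coord_unique:
  assumes "x \<in> E" and "\<forall>i. v x i = (\<Sum>b\<in>B. c b * v b i)" and "b \<in> B"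
  shows "coord x b = c b"
proof -
  have "\<forall>i. (\<Sum>b\<in>B. coord x b * v b i) = (\<Sum>b\<in>B. c b * v b i)"
    using coord_expansion[OF assms(1)] assms(2) by simp
  then show ?thesis by (rule lin_indep_family_coeffs_unique[OF lin_indep_basis _ assms(3)])
qed

lemma coord_basis:
  assumes "z \<in> B" and "b \<in> B"
  shows "coord z b = (if b = z then 1 else 0)"
proof (rule coord_unique)
  show "\<forall>i. v z i = (\<Sum>b\<in>B. (if b = z then 1 else 0) * v b i)"
    using sum_indicator_mult[OF assms(1)] by simp
qed (use assms basis_subset in auto)

lemma coord_lin_comb:
  assumes "Z \<subseteq> E" and "finite Z" and "x \<in> E" and "\<forall>i. v x i = (\<Sum>z\<in>Z. \<beta> z * v z i)"
    and "c \<in> B"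
  shows "coord x c = (\<Sum>z\<in>Z. \<beta> z * coord z c)"
proof (rule coord_unique[OF assms(3) _ assms(5)], rule allI)
  fix i
  have "v x i = (\<Sum>z\<in>Z. \<beta> z * v z i)" using assms(4) by simp
  also have "\<dots> = (\<Sum>z\<in>Z. \<beta> z * (\<Sum>b\<in>B. coord z b * v b i))"
    using assms(1) by (intro sum.cong refl) (metis coord_expansion subsetD)
  also have "\<dots> = (\<Sum>b\<in>B. (\<Sum>z\<in>Z. \<beta> z * coord z b) * v b i)"
    by (simp add: sum_distrib_left sum_distrib_right mult.assoc sum.swap[of _ Z])
  finally show "v x i = (\<Sum>b\<in>B. (\<Sum>z\<in>Z. \<beta> z * coord z b) * v b i)" .
qed

lemma in_span_iff_coord_vanish:
  assumes "G \<subseteq> B" and "x \<in> E"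
  shows "in_span v G x \<longleftrightarrow> (\<forall>b\<in>B - G. coord x b = 0)"
proof
  assume "in_span v G x"
  then obtain c where c: "\<forall>i. v x i = (\<Sum>g\<in>G. c g * v g i)"
    unfolding in_span_def by blast
  have "(\<Sum>g\<in>G. c g * v g i) = (\<Sum>b\<in>B. (if b \<in> G then c b else 0) * v b i)" for i
    using assms(1) finite_basis by (intro sum.mono_neutral_cong_left) auto
  with c have c': "\<forall>i. v x i = (\<Sum>b\<in>B. (if b \<in> G then c b else 0) * v b i)" by simp
  have "coord x b = (if b \<in> G then c b else 0)" if "b \<in> B" for b
    using coord_unique[OF assms(2) c' that] .
  then show "\<forall>b\<in>B - G. coord x b = 0" by simp
next
  assume vanish: "\<forall>b\<in>B - G. coord x b = 0"
  have "(\<Sum>b\<in>B. coord x b * v b i) = (\<Sum>g\<in>G. coord x g * v g i)" for i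
    using assms(1) finite_basis vanish by (intro sum.mono_neutral_right) auto
  then show "in_span v G x"
    unfolding in_span_def using coord_expansion[OF assms(2)] by metis
qed

lemma in_span_insert_if_coord_agree:
  assumes "G \<subseteq> B" and "x \<in> E - G" and "y \<in> E" and agree: "\<forall>b\<in>B - G. coord y b = coord x b"
  shows "in_span v (insert x G) y"
proof -
  define d where "d z = (if z = x then 1 else coord y z - coord x z)" for z
  have "finite G" using assms(1) finite_basis by (rule finite_subset)
  have "v y i = (\<Sum>z\<in>insert x G. d z * v z i)" for i
  proof -
    have "v y i = v x i + (\<Sum>b\<in>B. (coord y b - coord x b) * v b i)"
      using coord_expansion[of y i] coord_expansion[of x i] assms(2,3)
      by (simp add: left_diff_distrib sum_subtractf)
    also have "(\<Sum>b\<in>B. (coord y b - coord x b) * v b i) = (\<Sum>g\<in>G. d g * v g i)"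
      using assms(1,2) finite_basis agree by (intro sum.mono_neutral_cong_right) (auto simp: d_def)
    also have "v x i + (\<Sum>g\<in>G. d g * v g i) = (\<Sum>z\<in>insert x G. d z * v z i)"
      using \<open>finite G\<close> assms(2) by (simp add: d_def)
    finally show ?thesis .
  qed
  then show ?thesis unfolding in_span_def by blast
qed

lemma dep_insert_iff_coord_vanish:
  assumes "G \<subseteq> B" and "y \<in> E - G"
  shows "\<not> I (insert y G) \<longleftrightarrow> (\<forall>b\<in>B - G. coord y b = 0)"
  using dep_insert_iff_in_span[OF matroid_indep_mono[OF matroid indep_basis assms(1)] assms(2)]
    in_span_iff_coord_vanish[OF assms(1)] assms(2) by blast

lemma dep_insert_if_coord_agree:
  assumes "G \<subseteq> B" and "x \<in> E - G" and "I (insert x G)" and "y \<in> E - insert x G"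
    and "\<forall>b\<in>B - G. coord y b = coord x b"
  shows "\<not> I (insert y (insert x G))"
  using dep_insert_iff_in_span[OF assms(3,4)] in_span_insert_if_coord_agree[OF assms(1,2)] assms(4,5)
  by blast

lemma card_ground_le_if_simple:
  assumes "simple_matroid E I"
  shows "card E \<le> CARD('f) ^ card B"
proof -
  have "inj_on (\<lambda>x. restrict (coord x) B) E"
  proof (rule inj_onI, rule ccontr)
    fix x y
    assume "x \<in> E" "y \<in> E" "x \<noteq> y" and same: "restrict (coord x) B = restrict (coord y) B"
    have "coord x b = coord y b" if "b \<in> B" for b
      using same that by (metis restrict_apply')
    then have "v x i = v y i" for i
      using coord_expansion[OF \<open>x \<in> E\<close>, of i] coord_expansion[OF \<open>y \<in> E\<close>, of i] by simp
    then have "in_span v {y} x"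
      unfolding in_span_def by (intro exI[of _ "\<lambda>_. 1"]) simp
    moreover have "I {y}" and "I (insert x {y})"
      using assms \<open>x \<in> E\<close> \<open>y \<in> E\<close> unfolding simple_matroid_def by (simp_all add: card_insert_if)
    ultimately show False
      using dep_insert_iff_in_span[of "{y}" x] \<open>x \<in> E\<close> \<open>x \<noteq> y\<close> by blast
  qed
  then have "card E = card ((\<lambda>x. restrict (coord x) B) ` E)" by (simp add: card_image)
  also have "\<dots> \<le> CARD('f) ^ card B" using finite_basis by (rule card_restrict_image_le)
  finally show ?thesis .
qed

lemma card_basis_le_if_cosimple:
  assumes "cosimple_matroid E I"
  shows "card B \<le> CARD('f) ^ card (E - B)"
proof -
  have "inj_on (\<lambda>b. restrict (\<lambda>y. coord y b) (E - B)) B"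
  proof (rule inj_onI, rule ccontr)
    fix b b'
    assume b: "b \<in> B" "b' \<in> B" "b \<noteq> b'"
      and same: "restrict (\<lambda>y. coord y b) (E - B) = restrict (\<lambda>y. coord y b') (E - B)"
    have "{b, b'} \<subseteq> E" and "card {b, b'} \<le> 2"
      using b basis_subset by auto
    then have "dual_indep E I {b, b'}"
      using assms unfolding cosimple_matroid_def simple_matroid_def by blast
    then obtain B' where "is_basis I B'" "b \<notin> B'" "b' \<notin> B'"
      unfolding dual_indep_def by blast
    then have "I B'" and "\<not> I (insert b B')" unfolding is_basis_def by auto
    then obtain \<beta> where \<beta>: "\<forall>i. v b i = (\<Sum>z\<in>B'. \<beta> z * v z i)"
      using dep_insert_iff_in_span[of B' b] b basis_subset \<open>b \<notin> B'\<close> unfolding in_span_def by blast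
    have "B' \<subseteq> E" "finite B'"
      using matroid_indep_subset[OF matroid] matroid_finite_indep[OF matroid] \<open>I B'\<close> by auto
    have agree: "coord z b = coord z b'" if "z \<in> B'" for z
    proof (cases "z \<in> B")
      case True
      then show ?thesis
        using coord_basis[OF True b(1)] coord_basis[OF True b(2)] that \<open>b \<notin> B'\<close> \<open>b' \<notin> B'\<close> by auto
    next
      case False
      then have "z \<in> E - B" using that \<open>B' \<subseteq> E\<close> by blast
      moreover have "restrict (\<lambda>y. coord y b) (E - B) z = restrict (\<lambda>y. coord y b') (E - B) z"
        using same by simp
      ultimately show ?thesis by simp
    qed
    have "b \<in> E" using b basis_subset by blast
    have "1 = (\<Sum>z\<in>B'. \<beta> z * coord z b)"
      using coord_lin_comb[OF \<open>B' \<subseteq> E\<close> \<open>finite B'\<close> \<open>b \<in> E\<close> \<beta> b(1)] coord_basis[OF b(1) b(1)] by simp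
    also have "\<dots> = (\<Sum>z\<in>B'. \<beta> z * coord z b')"
      using agree by (intro sum.cong) simp_all
    also have "\<dots> = 0"
      using coord_lin_comb[OF \<open>B' \<subseteq> E\<close> \<open>finite B'\<close> \<open>b \<in> E\<close> \<beta> b(2)] coord_basis[OF b(1) b(2)] b(3)
      by simp
    finally show False by simp
  qed
  then have "card B = card ((\<lambda>b. restrict (\<lambda>y. coord y b) (E - B)) ` B)" by (simp add: card_image)
  also have "\<dots> \<le> CARD('f) ^ card (E - B)"
    using finite_E by (intro card_restrict_image_le) simp
  finally show ?thesis .
qed

lemma card_coord_class_le:
  assumes KL: "kl_uniform k l E I" and "H \<subseteq> B" and "k < card H"
  shows "card {x \<in> E - (B - H). restrict (coord x) H = \<kappa>} \<le> l"
proof -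
  define G where "G = B - H"
  define P where "P = {x \<in> E - G. restrict (coord x) H = \<kappa>}"
  have "G \<subseteq> B" and "B - G = H" using \<open>H \<subseteq> B\<close> unfolding G_def by auto
  have "I G" using matroid_indep_mono[OF matroid indep_basis \<open>G \<subseteq> B\<close>] .
  have "finite G" using \<open>G \<subseteq> B\<close> finite_basis by (rule finite_subset)
  have "finite H" using \<open>H \<subseteq> B\<close> finite_basis by (rule finite_subset)
  have "card G + k < card B"
    using card_Diff_subset[OF \<open>finite H\<close> \<open>H \<subseteq> B\<close>] card_mono[OF finite_basis \<open>H \<subseteq> B\<close>]
      \<open>k < card H\<close> unfolding G_def by simp
  have "P \<subseteq> E - G" and "finite P" unfolding P_def using finite_E by auto
  have coord_P: "coord x h = \<kappa> h" if "x \<in> P" and "h \<in> H" for x h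
    using that unfolding P_def by (metis (mono_tags, lifting) mem_Collect_eq restrict_apply')
  note card_spanned_less = card_spanned_less_if_kl_uniform[OF matroid KL _ indep_basis]
  consider "P = {}" | "\<forall>h\<in>H. \<kappa> h = 0" | x0 h0 where "x0 \<in> P" and "h0 \<in> H" and "\<kappa> h0 \<noteq> 0"
    by blast
  then have "card P \<le> l"
  proof cases
    case 1
    then show ?thesis by simp
  next
    case 2
    have "\<not> I (insert y G)" if "y \<in> P" for y
    proof -
      have "y \<in> E - G" using that \<open>P \<subseteq> E - G\<close> by blast
      then show ?thesis
        using dep_insert_iff_coord_vanish[OF \<open>G \<subseteq> B\<close>] coord_P[OF that] 2 \<open>B - G = H\<close> by simp
    qed
    then show ?thesis
      using card_spanned_less[OF \<open>I G\<close> _ \<open>P \<subseteq> E - G\<close>] \<open>card G + k < card B\<close> by simp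
  next
    case 3
    have "x0 \<in> E - G" using \<open>x0 \<in> P\<close> \<open>P \<subseteq> E - G\<close> by blast
    have "I (insert x0 G)"
      using dep_insert_iff_coord_vanish[OF \<open>G \<subseteq> B\<close> \<open>x0 \<in> E - G\<close>] coord_P[OF 3(1,2)] 3(2,3)
        \<open>B - G = H\<close> by auto
    have "P - {x0} \<subseteq> E - insert x0 G" using \<open>P \<subseteq> E - G\<close> by blast
    moreover have "\<not> I (insert y (insert x0 G))" if "y \<in> P - {x0}" for y
      using dep_insert_if_coord_agree[OF \<open>G \<subseteq> B\<close> \<open>x0 \<in> E - G\<close> \<open>I (insert x0 G)\<close>] coord_P
        \<open>x0 \<in> P\<close> that \<open>P - {x0} \<subseteq> E - insert x0 G\<close> \<open>B - G = H\<close> by auto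
    moreover have "card (insert x0 G) + k \<le> card B"
      using \<open>card G + k < card B\<close> \<open>finite G\<close> \<open>x0 \<in> E - G\<close> by simp
    ultimately have "card (P - {x0}) < l"
      using card_spanned_less[OF \<open>I (insert x0 G)\<close>] by blast
    then show ?thesis using \<open>x0 \<in> P\<close> \<open>finite P\<close> by simp
  qed
  then show ?thesis unfolding P_def G_def .
qed

lemma card_ground_le_if_kl_uniform:
  assumes "kl_uniform k l E I" and "k < card B"
  shows "card E \<le> card B + CARD('f) ^ (k + 1) * l"
proof -
  obtain H where "H \<subseteq> B" and "card H = k + 1"
    using obtain_subset_with_card_n[of "k + 1" B] assms(2) by auto
  define G where "G = B - H"
  define key where "key x = restrict (coord x) H" for x
  have "finite H" using \<open>H \<subseteq> B\<close> finite_basis by (rule finite_subset)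
  have "G \<subseteq> E" using basis_subset unfolding G_def by blast
  then have "card E = card G + card (E - G)"
    using finite_E by (metis card_Diff_subset card_mono finite_subset le_add_diff_inverse)
  also have "card (E - G) \<le> card (key ` (E - G)) * l"
    using finite_E card_coord_class_le[OF assms(1) \<open>H \<subseteq> B\<close>] \<open>card H = k + 1\<close>
    unfolding key_def G_def by (intro card_le_card_image_mult) auto
  also have "card (key ` (E - G)) \<le> CARD('f) ^ (k + 1)"
    using card_restrict_image_le[OF \<open>finite H\<close>] \<open>card H = k + 1\<close> unfolding key_def by metis
  also have "card G \<le> card B" using finite_basis unfolding G_def by (rule card_mono) blast
  finally show ?thesis by simp
qed

end

lemma card_ground_le_if_representable:
  fixes v :: "'a \<Rightarrow> nat \<Rightarrow> 'f::{field,finite}"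
  assumes "matroid E I" and "simple_matroid E I" and "cosimple_matroid E I"
    and "represents v E I" and "kl_uniform k l E I"
  shows "card E \<le> CARD('f) ^ k + CARD('f) ^ (CARD('f) ^ (k + 1) * l) + CARD('f) ^ (k + 1) * l"
proof -
  obtain B where "I B" and "\<And>X. I X \<Longrightarrow> card X \<le> card B"
    using ex_max_card_indep[OF assms(1)] by blast
  then interpret represented_matroid E I v B
    using assms(1,4) by unfold_locales
  have "1 \<le> CARD('f)" by (simp add: Suc_leI)
  show ?thesis
  proof (cases "card B \<le> k")
    case True
    then have "card E \<le> CARD('f) ^ k"
      using card_ground_le_if_simple[OF assms(2)] power_increasing[OF _ \<open>1 \<le> CARD('f)\<close>]
        order_trans by blast
    then show ?thesis by simp
  next
    case False
    define m where "m = CARD('f) ^ (k + 1) * l"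
    have "card E \<le> card B + m"
      using card_ground_le_if_kl_uniform[OF assms(5)] False unfolding m_def by simp
    then have "card (E - B) \<le> m"
      using card_Diff_subset[OF finite_basis basis_subset] by simp
    then have "card B \<le> CARD('f) ^ m"
      using card_basis_le_if_cosimple[OF assms(3)] power_increasing[OF _ \<open>1 \<le> CARD('f)\<close>]
        order_trans by blast
    with \<open>card E \<le> card B + m\<close> show ?thesis unfolding m_def by simp
  qed
qed

section \<open>Finitely many isomorphism types\<close>

lemma finite_set_systems:
  assumes "finite A"
  shows "finite {I :: 'b set \<Rightarrow> bool. \<forall>X. I X \<longrightarrow> X \<subseteq> A}"
proof (rule finite_subset)
  show "{I :: 'b set \<Rightarrow> bool. \<forall>X. I X \<longrightarrow> X \<subseteq> A} \<subseteq> (\<lambda>S X. X \<in> S) ` Pow (Pow A)"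
  proof
    fix I :: "'b set \<Rightarrow> bool"
    assume "I \<in> {I. \<forall>X. I X \<longrightarrow> X \<subseteq> A}"
    then have "{X. I X} \<in> Pow (Pow A)" by auto
    moreover have "I = (\<lambda>X. X \<in> {X. I X})" by simp
    ultimately show "I \<in> (\<lambda>S X. X \<in> S) ` Pow (Pow A)" by blast
  qed
  show "finite ((\<lambda>S X. X \<in> S) ` Pow (Pow A))" using assms by simp
qed

lemma matroid_iso_to_initial_segment:
  assumes "finite E"
  obtains I' where "matroid_iso E I {..<card E} I'" and "\<And>X. I' X \<Longrightarrow> X \<subseteq> {..<card E}"
proof -
  obtain g where g: "bij_betw g E {..<card E}"
    using ex_bij_betw_finite_nat[OF assms] by (auto simp: atLeast0LessThan)
  define I' where "I' X \<longleftrightarrow> X \<subseteq> {..<card E} \<and> I (inv_into E g ` X)" for X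
  have "I X \<longleftrightarrow> I' (g ` X)" if "X \<subseteq> E" for X
    using that g inv_into_image_cancel[of g E X] unfolding I'_def bij_betw_def by auto
  then have "matroid_iso E I {..<card E} I'"
    unfolding matroid_iso_def using g by blast
  moreover have "X \<subseteq> {..<card E}" if "I' X" for X using that unfolding I'_def by blast
  ultimately show thesis using that by blast
qed

lemma ex_finite_iso_representatives:
  obtains S :: "(nat set \<times> (nat set \<Rightarrow> bool)) set"
  where "finite S"
    and "\<And>(E :: 'a set) I. finite E \<Longrightarrow> card E \<le> N \<Longrightarrow> \<exists>(E', I') \<in> S. matroid_iso E I E' I'"
proof
  define S :: "(nat set \<times> (nat set \<Rightarrow> bool)) set"
    where "S = {(E', I'). E' \<subseteq> {..<N} \<and> (\<forall>X. I' X \<longrightarrow> X \<subseteq> E')}"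
  have "S \<subseteq> Pow {..<N} \<times> {I'. \<forall>X. I' X \<longrightarrow> X \<subseteq> {..<N}}"
    unfolding S_def by auto
  then show "finite S"
    using finite_set_systems[of "{..<N}"] by (auto intro: finite_subset)
  fix E :: "'a set" and I
  assume "finite E" and "card E \<le> N"
  obtain I' where "matroid_iso E I {..<card E} I'" and "\<And>X. I' X \<Longrightarrow> X \<subseteq> {..<card E}"
    using matroid_iso_to_initial_segment[OF \<open>finite E\<close>] by blast
  moreover have "{..<card E} \<subseteq> {..<N}" using \<open>card E \<le> N\<close> by auto
  ultimately show "\<exists>(E', I') \<in> S. matroid_iso E I E' I'"
    unfolding S_def by blast
qed

theorem theorem1p1:
  fixes k l :: nat
  assumes "k \<ge> 1" and "l \<ge> 1"
  shows "\<exists>S :: (nat set \<times> (nat set \<Rightarrow> bool)) set. finite S \<and>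
    (\<forall>(E :: 'a set) I.
       matroid E I \<and> simple_matroid E I \<and> cosimple_matroid E I \<and>
       (\<exists>v :: 'a \<Rightarrow> nat \<Rightarrow> 'f::{field,finite}. represents v E I) \<and>
       kl_uniform k l E I
       \<longrightarrow> (\<exists>(E', I') \<in> S. matroid_iso E I E' I'))"
proof -
  \<comment> \<open>The size bound holds for all k and l.\<close>
  define q where "q = CARD('f)"
  obtain S :: "(nat set \<times> (nat set \<Rightarrow> bool)) set" where "finite S"
    and S: "\<And>(E :: 'a set) I. finite E \<Longrightarrow> card E \<le> q ^ k + q ^ (q ^ (k + 1) * l) + q ^ (k + 1) * l
      \<Longrightarrow> \<exists>(E', I') \<in> S. matroid_iso E I E' I'"
    using ex_finite_iso_representatives by blast
  have "\<exists>(E', I') \<in> S. matroid_iso E I E' I'"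
    if "matroid E I" "simple_matroid E I" "cosimple_matroid E I"
      "represents (v :: 'a \<Rightarrow> nat \<Rightarrow> 'f) E I" "kl_uniform k l E I" for E :: "'a set" and I v
    using S[OF matroid_finite[OF that(1)]] card_ground_le_if_representable[OF that]
    unfolding q_def by blast
  with \<open>finite S\<close> show ?thesis by blast
qed

end
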